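(* For $n=0,1,2,\ldots$ let $R_n=\sum_{k=0}^n\binom{n}{k}\binom{n+k}{k}\frac{1}{2k-1}$, let $r_n=R_{n+1}/R_n$, and for $n\geq 1$ let $$b_n=3+2\sqrt{2}-\frac{3(41\sqrt{2}+58)}{(14\sqrt{2}+20)n}=\left(3-\frac{9}{2n}\right)+\sqrt{2}\left(2-\frac{3}{n}\right).$$ Then for all $n\geq 3$, $b_n<r_n<b_{n+1}$. *)

theory Defs
  imports Complex_Main
begin

definition R :: "nat \<Rightarrow> real" where
  "R n = (\<Sum>k=0..n. real (n choose k) * real ((n + k) choose k) * (1 / (2 * real k - 1)))"

definition r :: "nat \<Rightarrow> real" where
  "r n = R (n + 1) / R n"

definition b :: "nat \<Rightarrow> real" where
  "b n = 3 + 2 * sqrt 2 - 3 * (41 * sqrt 2 + 58) / ((14 * sqrt 2 + 20) * real n)"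

end

theory Submission
  imports Defs
begin

text \<open>
  Creative telescoping gives the recurrence
  (n+3) R(n+3) = (7n+13) R(n+2) - (7n+15) R(n+1) + (n+1) R(n), i.e. r(n+2) = F_n(r(n+1), r(n)) with
  F_n(u,y) = ((7n+13) - (7n+15)/u + (n+1)/(u y)) / (n+3), which is increasing in u and decreasing
  in y for y \<ge> 1. Hence the bracket b(m) < r(m) < b(m+1) propagates from m and m+1 to m+2 as soon
  as b(n+2) \<le> F_n(b(n+1), b(n+1)) and F_n(b(n+2), b(n)) \<le> b(n+3); after clearing denominators
  these are polynomials in n - 4 with positive coefficients.
\<close>

definition legendre_coeff :: "nat \<Rightarrow> nat \<Rightarrow> real" where
  "legendre_coeff m k = real (m choose k) * real ((m + k) choose k)"

text \<open>The Zeilberger certificate of the recurrence for \<open>R\<close>.\<close>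

definition telescoper :: "nat \<Rightarrow> nat \<Rightarrow> real" where
  "telescoper n k = real ((n + 2) choose k) * real ((n + k + 1) choose k)"

lemma binomial_absorb_comp_Suc: "(m + 1 - k) * ((m + 1) choose k) = (m + 1) * (m choose k)"
  by (simp add: binomial_absorb_comp)

lemma binomial_Suc_upper_mult: "((m + k + 1) choose k) * (m + 1) = (m + k + 1) * ((m + k) choose k)"
  using binomial_absorb_comp[of "m + k + 1" k] by (simp add: mult.commute)

lemma legendre_coeff_Suc:
  "legendre_coeff (m + 1) k * (real m + 1 - real k) = (real m + 1 + real k) * legendre_coeff m k"
proof (cases "k \<le> m + 1")
  case True
  have a: "real (m + 1 - k) * real ((m + 1) choose k) = real (m + 1) * real (m choose k)"
    using binomial_absorb_comp_Suc[of m k] by (metis of_nat_mult)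
  have b: "real ((m + k + 1) choose k) * real (m + 1) = real (m + k + 1) * real ((m + k) choose k)"
    using binomial_Suc_upper_mult[of m k] by (metis of_nat_mult)
  have "legendre_coeff (m + 1) k * (real m + 1 - real k) * real (m + 1)
      = (real (m + 1 - k) * real ((m + 1) choose k)) * (real ((m + k + 1) choose k) * real (m + 1))"
    using True unfolding legendre_coeff_def by (simp add: of_nat_diff algebra_simps)
  also have "\<dots> = (real m + 1 + real k) * legendre_coeff m k * real (m + 1)"
    unfolding a b legendre_coeff_def by simp
  finally show ?thesis by simp
next
  case False
  then show ?thesis by (simp add: legendre_coeff_def binomial_eq_0)
qed

lemma legendre_coeff_telescoper:
  "legendre_coeff (n + 3) k * (real n + 3 - real k) * (real n + 2)
     = (real n + real k + 3) * (real n + real k + 2) * telescoper n k"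
proof (cases "k \<le> n + 3")
  case True
  have a: "real (n + 3 - k) * real ((n + 3) choose k) = real (n + 3) * real ((n + 2) choose k)"
    using binomial_absorb_comp_Suc[of "n + 2" k] by (metis of_nat_mult add.assoc numeral_3_eq_3
        numeral_2_eq_2 Suc_eq_plus1 one_add_one)
  have b: "real ((n + k + 3) choose k) * real (n + 3) = real (n + k + 3) * real ((n + k + 2) choose k)"
    using binomial_Suc_upper_mult[of "n + 2" k] by (metis of_nat_mult add.assoc add.commute
        numeral_3_eq_3 numeral_2_eq_2 Suc_eq_plus1 one_add_one)
  have c: "real ((n + k + 2) choose k) * real (n + 2) = real (n + k + 2) * real ((n + k + 1) choose k)"
    using binomial_Suc_upper_mult[of "n + 1" k] by (metis of_nat_mult add.assoc add.commute
        numeral_2_eq_2 Suc_eq_plus1 one_add_one)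
  have "legendre_coeff (n + 3) k * (real n + 3 - real k) * (real n + 2) * real (n + 3)
     = (real (n + 3 - k) * real ((n + 3) choose k)) * (real ((n + k + 3) choose k) * real (n + 3))
         * (real n + 2)"
    using True unfolding legendre_coeff_def by (simp add: of_nat_diff algebra_simps)
  also have "\<dots> = real (n + 3) * real ((n + 2) choose k) * real (n + k + 3)
                    * (real ((n + k + 2) choose k) * real (n + 2))"
    unfolding a b by (simp add: algebra_simps)
  also have "\<dots> = (real n + real k + 3) * (real n + real k + 2) * telescoper n k * real (n + 3)"
    unfolding c telescoper_def by (simp add: algebra_simps)
  finally show ?thesis by simp
next
  case False
  then show ?thesis by (simp add: legendre_coeff_def telescoper_def binomial_eq_0)
qed

lemma legendre_coeff_Suc_telescoper:
  "legendre_coeff (n + 3) (Suc j) * (real j + 1)^2 * (real n + 2)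
     = (real n + real j + 2) * (real n + real j + 3) * (real n + real j + 4) * telescoper n j"
proof -
  have a: "(real j + 1) * real ((n + 3) choose Suc j) = (real n + 3) * real ((n + 2) choose j)"
    using arg_cong[OF binomial_absorption[of j "n + 3"], of real] by (simp add: algebra_simps)
  have b: "(real j + 1) * real ((n + j + 4) choose Suc j)
             = (real n + real j + 4) * real ((n + j + 3) choose j)"
    using arg_cong[OF binomial_absorption[of j "n + j + 4"], of real] by (simp add: algebra_simps)
  have c: "real ((n + j + 3) choose j) * (real n + 3)
             = (real n + real j + 3) * real ((n + j + 2) choose j)"
    using arg_cong[OF binomial_Suc_upper_mult[of "n + 2" j], of real]
    by (simp add: algebra_simps eval_nat_numeral)
  have d: "real ((n + j + 2) choose j) * (real n + 2)
             = (real n + real j + 2) * real ((n + j + 1) choose j)"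
    using arg_cong[OF binomial_Suc_upper_mult[of "n + 1" j], of real]
    by (simp add: algebra_simps eval_nat_numeral)
  have "legendre_coeff (n + 3) (Suc j) * (real j + 1)^2 * (real n + 2) * (real n + 3)
     = ((real j + 1) * real ((n + 3) choose Suc j)) * ((real j + 1) * real ((n + j + 4) choose Suc j))
         * (real n + 2) * (real n + 3)"
    unfolding legendre_coeff_def by (simp add: power2_eq_square algebra_simps)
  also have "\<dots> = (real n + 3) * real ((n + 2) choose j) * (real n + real j + 4)
                   * (real ((n + j + 3) choose j) * (real n + 3)) * (real n + 2)"
    unfolding a b by (simp add: algebra_simps)
  also have "\<dots> = (real n + 3) * real ((n + 2) choose j) * (real n + real j + 4) * (real n + real j + 3)
                   * (real ((n + j + 2) choose j) * (real n + 2))"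
    unfolding c by (simp add: algebra_simps)
  also have "\<dots> = (real n + real j + 2) * (real n + real j + 3) * (real n + real j + 4)
                   * telescoper n j * (real n + 3)"
    unfolding d telescoper_def by (simp add: algebra_simps)
  finally show ?thesis by simp
qed

lemma recurrence_summand_telescopes:
  "((real n + 3) * legendre_coeff (n + 3) k - (7 * real n + 13) * legendre_coeff (n + 2) k
     + (7 * real n + 15) * legendre_coeff (n + 1) k - (real n + 1) * legendre_coeff n k)
     / (2 * real k - 1)
   = 4 * (if k = 0 then 0 else telescoper n (k - 1)) - 4 * telescoper n k"
proof (cases k)
  case 0
  then show ?thesis by (simp add: legendre_coeff_def telescoper_def)
next
  case (Suc j)
  define x where "x = real n"
  define K where "K = real k"
  define U where "U = legendre_coeff (n + 3) k"
  have K: "K = real j + 1" using Suc K_def by simp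
  have x0: "x \<ge> 0" and K1: "K \<ge> 1" using K x_def by simp_all
  have e2: "U * (x + 3 - K) = (x + 3 + K) * legendre_coeff (n + 2) k"
    using legendre_coeff_Suc[of "n + 2" k] unfolding x_def K_def U_def
    by (simp add: algebra_simps eval_nat_numeral)
  have e1: "legendre_coeff (n + 2) k * (x + 2 - K) = (x + 2 + K) * legendre_coeff (n + 1) k"
    using legendre_coeff_Suc[of "n + 1" k] unfolding x_def K_def
    by (simp add: algebra_simps eval_nat_numeral)
  have e0: "legendre_coeff (n + 1) k * (x + 1 - K) = (x + 1 + K) * legendre_coeff n k"
    using legendre_coeff_Suc[of n k] unfolding x_def K_def by (simp add: algebra_simps)
  have ya: "U * (x + 3 - K) * (x + 2) = (x + K + 3) * (x + K + 2) * telescoper n k"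
    using legendre_coeff_telescoper[of n k] unfolding x_def K_def U_def by simp
  have yb: "U * K^2 * (x + 2) = (x + K + 1) * (x + K + 2) * (x + K + 3) * telescoper n j"
    using legendre_coeff_Suc_telescoper[of n j] unfolding x_def K U_def Suc
    by (simp add: algebra_simps)
  have "((x + 3) * U - (7 * x + 13) * legendre_coeff (n + 2) k
         + (7 * x + 15) * legendre_coeff (n + 1) k - (x + 1) * legendre_coeff n k
         - (2 * K - 1) * (4 * telescoper n j - 4 * telescoper n k))
        * ((x + 3 + K) * (x + 2 + K) * (x + 1 + K)) = 0"
    using e0 e1 e2 ya yb by algebra
  moreover have "(x + 3 + K) * (x + 2 + K) * (x + 1 + K) \<noteq> 0" using x0 K1 by simp
  moreover have "2 * K - 1 \<noteq> 0" using K1 by simp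
  ultimately show ?thesis unfolding U_def x_def K_def using Suc by simp
qed

lemma R_eq_sum_legendre_coeff:
  assumes "m \<le> N"
  shows "R m = (\<Sum>k<Suc N. legendre_coeff m k / (2 * real k - 1))"
proof -
  have "R m = (\<Sum>k\<in>{0..m}. legendre_coeff m k / (2 * real k - 1))"
    unfolding R_def legendre_coeff_def by simp
  also have "\<dots> = (\<Sum>k<Suc N. legendre_coeff m k / (2 * real k - 1))"
    by (rule sum.mono_neutral_left) (use assms in \<open>auto simp: legendre_coeff_def binomial_eq_0\<close>)
  finally show ?thesis .
qed

lemma R_recurrence:
  "(real n + 3) * R (n + 3)
     = (7 * real n + 13) * R (n + 2) - (7 * real n + 15) * R (n + 1) + (real n + 1) * R n"
proof -
  define G where "G k = (if k = 0 then 0 else 4 * telescoper n (k - 1))" for k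
  have "(real n + 3) * R (n + 3) - (7 * real n + 13) * R (n + 2) + (7 * real n + 15) * R (n + 1)
          - (real n + 1) * R n
        = (\<Sum>k<Suc (n + 3). ((real n + 3) * legendre_coeff (n + 3) k
             - (7 * real n + 13) * legendre_coeff (n + 2) k
             + (7 * real n + 15) * legendre_coeff (n + 1) k - (real n + 1) * legendre_coeff n k)
             / (2 * real k - 1))"
    by (simp add: R_eq_sum_legendre_coeff[of _ "n + 3"] sum_distrib_left sum_subtractf sum.distrib
        diff_divide_distrib add_divide_distrib)
  also have "\<dots> = (\<Sum>k<Suc (n + 3). G k - G (Suc k))"
    unfolding recurrence_summand_telescopes G_def by (intro sum.cong) auto
  also have "\<dots> = G 0 - G (Suc (n + 3))" by (rule sum_lessThan_telescope')
  also have "\<dots> = 0" unfolding G_def telescoper_def by (simp add: binomial_eq_0)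
  finally show ?thesis by simp
qed

definition ratio_step :: "real \<Rightarrow> real \<Rightarrow> real \<Rightarrow> real" where
  "ratio_step x u y = ((7 * x + 13) - (7 * x + 15) / u + (x + 1) / (u * y)) / (x + 3)"

lemma r_recurrence:
  assumes "R m \<noteq> 0" "R (m + 1) \<noteq> 0" "R (m + 2) \<noteq> 0"
  shows "r (m + 2) = ratio_step (real m) (r (m + 1)) (r m)"
proof -
  have "(real m + 3) * ratio_step (real m) (r (m + 1)) (r m)
      = (7 * real m + 13) - (7 * real m + 15) / r (m + 1) + (real m + 1) / (r (m + 1) * r m)"
    unfolding ratio_step_def by (simp add: add_pos_nonneg)
  also have "\<dots> = ((7 * real m + 13) * R (m + 2) - (7 * real m + 15) * R (m + 1)
                      + (real m + 1) * R m) / R (m + 2)"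
    using assms unfolding r_def by (simp add: field_simps eval_nat_numeral)
  also have "\<dots> = (real m + 3) * r (m + 2)"
    unfolding R_recurrence[symmetric] r_def by (simp add: eval_nat_numeral)
  finally show ?thesis by simp
qed

lemma ratio_step_strict_mono:
  assumes "x \<ge> 0" "y \<ge> 1" "0 < u" "u < u'"
  shows "ratio_step x u y < ratio_step x u' y"
proof -
  have "(x + 1) / y \<le> x + 1" using assms by (simp add: divide_le_eq)
  then have pos: "(7 * x + 15) - (x + 1) / y > 0" using assms by linarith
  have "((7 * x + 15) - (x + 1) / y) / u' < ((7 * x + 15) - (x + 1) / y) / u"
    using assms pos by (intro divide_strict_left_mono) auto
  moreover have "(7 * x + 15) / v - (x + 1) / (v * y) = ((7 * x + 15) - (x + 1) / y) / v" for v
    by (simp add: diff_divide_distrib)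
  ultimately show ?thesis unfolding ratio_step_def using assms
    by (intro divide_strict_right_mono) (smt (verit))+
qed

lemma ratio_step_strict_antimono:
  assumes "x \<ge> 0" "0 < u" "0 < y" "y < y'"
  shows "ratio_step x u y' < ratio_step x u y"
proof -
  have "(x + 1) / (u * y') < (x + 1) / (u * y)"
    using assms by (intro divide_strict_left_mono) auto
  then show ?thesis unfolding ratio_step_def using assms by (intro divide_strict_right_mono) auto
qed

definition beta :: "real \<Rightarrow> real" where
  "beta x = 3 + 2 * sqrt 2 - (9 / 2 + 3 * sqrt 2) / x"

lemma b_eq_beta: "b n = beta (real n)"
proof -
  have "3 * (41 * sqrt 2 + 58) = (9 / 2 + 3 * sqrt 2) * (14 * sqrt 2 + 20)"
    by (simp add: algebra_simps)
  moreover have "14 * sqrt 2 + 20 \<noteq> 0" by (smt (verit) real_sqrt_ge_zero)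
  ultimately show ?thesis unfolding b_def beta_def by simp
qed

lemma beta_gt_one:
  assumes "x \<ge> 4"
  shows "beta x > 1"
proof -
  have "(9 / 2 + 3 * sqrt 2) / x \<le> (9 / 2 + 3 * sqrt 2) / 4"
    using assms by (intro divide_left_mono) auto
  moreover have "(9 / 2 + 3 * sqrt 2) / 4 = 9 / 8 + 3 / 4 * sqrt 2" by simp
  moreover have "sqrt 2 \<ge> 0" by simp
  ultimately show ?thesis unfolding beta_def by linarith
qed

lemma beta_le_ratio_step_beta:
  assumes x4: "x \<ge> 4"
  shows "beta (x + 2) \<le> ratio_step x (beta (x + 1)) (beta (x + 1))"
proof -
  define s where "s = sqrt 2"
  define m where "m = x - 4"
  define P where "P = (3 + 2 * s) * (x + 1) - (9 / 2 + 3 * s)"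
  define Q where "Q = (3 + 2 * s) * (x + 2) - (9 / 2 + 3 * s)"
  have s0: "s > 0" and s2: "s * s = 2" and ss: "s * (s * y) = 2 * y" for y
    unfolding s_def by (simp_all add: mult.assoc[symmetric])
  have m0: "m \<ge> 0" using x4 m_def by simp
  have "(3 + 2 * s) * (x + 1) \<ge> (3 + 2 * s) * 5" using x4 s0 by (intro mult_left_mono) auto
  then have P0: "P > 0" unfolding P_def using s0 by (simp add: algebra_simps)
  have e1: "beta (x + 1) = P / (x + 1)" and e2: "beta (x + 2) = Q / (x + 2)"
    unfolding beta_def P_def Q_def s_def using x4 by (simp_all add: field_simps)
  have num: "((7 * x + 13) - (7 * x + 15) / beta (x + 1) + (x + 1) / (beta (x + 1) * beta (x + 1)))
               * ((x + 2) * P^2)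
             = (7 * x + 13) * (x + 2) * P^2 - (7 * x + 15) * (x + 1) * (x + 2) * P + (x + 1)^3 * (x + 2)"
    unfolding e1 using x4 P0 by (simp add: field_simps power2_eq_square power3_eq_cube)
  have "(7 * x + 13) * (x + 2) * P^2 - (7 * x + 15) * (x + 1) * (x + 2) * P + (x + 1)^3 * (x + 2)
          - (x + 3) * Q * P^2
        = (1863/8 + 483/4 * s) + (2529/8 + 831/4 * s) * m + (72 + 99/2 * s) * m^2"
    unfolding P_def Q_def m_def
    by (simp add: algebra_simps power2_eq_square power3_eq_cube ss s2) (simp add: field_simps)
  also have "\<dots> \<ge> 0" using s0 m0 by (intro add_nonneg_nonneg mult_nonneg_nonneg) auto
  finally have "(x + 3) * beta (x + 2) * ((x + 2) * P^2)
      \<le> ((7 * x + 13) - (7 * x + 15) / beta (x + 1) + (x + 1) / (beta (x + 1) * beta (x + 1)))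
          * ((x + 2) * P^2)"
    unfolding num e2 using x4 by simp
  then have "(x + 3) * beta (x + 2)
      \<le> (7 * x + 13) - (7 * x + 15) / beta (x + 1) + (x + 1) / (beta (x + 1) * beta (x + 1))"
    using x4 P0 by (simp add: mult_le_cancel_right)
  then show ?thesis unfolding ratio_step_def using x4 by (simp add: pos_le_divide_eq mult.commute)
qed

lemma ratio_step_beta_le_beta:
  assumes x4: "x \<ge> 4"
  shows "ratio_step x (beta (x + 2)) (beta x) \<le> beta (x + 3)"
proof -
  define s where "s = sqrt 2"
  define m where "m = x - 4"
  define P where "P = (3 + 2 * s) * (x + 2) - (9 / 2 + 3 * s)"
  define Q where "Q = (3 + 2 * s) * x - (9 / 2 + 3 * s)"
  define T where "T = (3 + 2 * s) * (x + 3) - (9 / 2 + 3 * s)"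
  have s0: "s > 0" and s2: "s * s = 2" and ss: "s * (s * y) = 2 * y" for y
    unfolding s_def by (simp_all add: mult.assoc[symmetric])
  have m0: "m \<ge> 0" using x4 m_def by simp
  have "(3 + 2 * s) * x \<ge> (3 + 2 * s) * 4" using x4 s0 by (intro mult_left_mono) auto
  then have Q0: "Q > 0" unfolding Q_def using s0 by (simp add: algebra_simps)
  have "(3 + 2 * s) * (x + 2) \<ge> (3 + 2 * s) * 4" using x4 s0 by (intro mult_left_mono) auto
  then have P0: "P > 0" unfolding P_def using s0 by (simp add: algebra_simps)
  have e0: "beta x = Q / x" and e2: "beta (x + 2) = P / (x + 2)" and e3: "beta (x + 3) = T / (x + 3)"
    unfolding beta_def P_def Q_def T_def s_def using x4 by (simp_all add: field_simps)
  have num: "((7 * x + 13) - (7 * x + 15) / beta (x + 2) + (x + 1) / (beta (x + 2) * beta x)) * (P * Q)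
             = (7 * x + 13) * P * Q - (7 * x + 15) * (x + 2) * Q + (x + 1) * (x + 2) * x"
    unfolding e0 e2 using x4 P0 Q0 by (simp add: field_simps)
  have "T * P * Q - ((7 * x + 13) * P * Q - (7 * x + 15) * (x + 2) * Q + (x + 1) * (x + 2) * x)
        = (795/8 + 345/4 * s) + (45 + 69/2 * s) * m"
    unfolding P_def Q_def T_def m_def
    by (simp add: algebra_simps power2_eq_square power3_eq_cube ss s2) (simp add: field_simps)
  also have "\<dots> \<ge> 0" using s0 m0 by (intro add_nonneg_nonneg mult_nonneg_nonneg) auto
  finally have "((7 * x + 13) - (7 * x + 15) / beta (x + 2) + (x + 1) / (beta (x + 2) * beta x))
                  * (P * Q)
                \<le> (x + 3) * beta (x + 3) * (P * Q)"
    unfolding num e3 using x4 by simp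
  then have "(7 * x + 13) - (7 * x + 15) / beta (x + 2) + (x + 1) / (beta (x + 2) * beta x)
               \<le> (x + 3) * beta (x + 3)"
    using P0 Q0 by (simp add: mult_le_cancel_right)
  then show ?thesis unfolding ratio_step_def using x4 by (simp add: divide_le_eq mult.commute)
qed

lemma ratio_bracket_step:
  assumes m4: "m \<ge> 4" and R0: "R m > 0" "R (m + 1) > 0"
    and brackets: "b m < r m" "r m < b (m + 1)" "b (m + 1) < r (m + 1)" "r (m + 1) < b (m + 2)"
  shows "R (m + 2) > 0 \<and> b (m + 2) < r (m + 2) \<and> r (m + 2) < b (m + 3)"
proof -
  define x where "x = real m"
  have x4: "x \<ge> 4" using m4 x_def by simp
  have b_beta: "b m = beta x" "b (m + 1) = beta (x + 1)" "b (m + 2) = beta (x + 2)"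
      "b (m + 3) = beta (x + 3)"
    unfolding b_eq_beta x_def by (simp_all add: add.commute)
  have beta1: "beta x > 1" "beta (x + 1) > 1" "beta (x + 2) > 1"
    using x4 by (simp_all add: beta_gt_one)
  have rm: "r m > 1" and rm1: "r (m + 1) > 0"
    using brackets beta1 unfolding b_beta by linarith+
  have "R (m + 2) = r (m + 1) * R (m + 1)"
    unfolding r_def using R0 by (simp add: eval_nat_numeral)
  then have R2: "R (m + 2) > 0" using rm1 R0 by simp
  then have r2: "r (m + 2) = ratio_step x (r (m + 1)) (r m)"
    unfolding x_def using R0 by (intro r_recurrence) auto
  have "beta (x + 2) \<le> ratio_step x (beta (x + 1)) (beta (x + 1))"
    using x4 by (rule beta_le_ratio_step_beta)
  also have "\<dots> < ratio_step x (beta (x + 1)) (r m)"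
    using x4 beta1 rm brackets unfolding b_beta by (intro ratio_step_strict_antimono) auto
  also have "\<dots> < ratio_step x (r (m + 1)) (r m)"
    using x4 beta1 rm brackets unfolding b_beta by (intro ratio_step_strict_mono) auto
  finally have lower: "b (m + 2) < r (m + 2)" unfolding r2 b_beta .
  have "ratio_step x (r (m + 1)) (r m) < ratio_step x (beta (x + 2)) (r m)"
    using x4 rm rm1 brackets unfolding b_beta by (intro ratio_step_strict_mono) auto
  also have "\<dots> < ratio_step x (beta (x + 2)) (beta x)"
    using x4 beta1 brackets unfolding b_beta by (intro ratio_step_strict_antimono) auto
  also have "\<dots> \<le> beta (x + 3)" using x4 by (rule ratio_step_beta_le_beta)
  finally have upper: "r (m + 2) < b (m + 3)" unfolding r2 b_beta .
  show ?thesis using R2 lower upper by blast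
qed

lemma R_small_values: "R 3 = 25" "R 4 = 87" "R 5 = 329" "R 6 = 1359"
proof -
  have R012: "R 0 = -1" "R 1 = 1" "R 2 = 7" unfolding R_def by (simp_all add: numeral_2_eq_2)
  show R3: "R 3 = 25" using R_recurrence[of 0] R012 by (simp add: eval_nat_numeral)
  show R4: "R 4 = 87" using R_recurrence[of 1] R012 R3 by (simp add: eval_nat_numeral)
  show R5: "R 5 = 329" using R_recurrence[of 2] R012 R3 R4 by (simp add: eval_nat_numeral)
  show "R 6 = 1359" using R_recurrence[of 3] R3 R4 R5 by (simp add: eval_nat_numeral)
qed

lemma sqrt2_bounds: "1.414 < sqrt 2" "sqrt 2 < 1.415"
  by (rule real_less_rsqrt real_less_lsqrt; simp add: power2_eq_square)+

lemma ratio_bracket: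
  assumes "n \<ge> 4"
  shows "R n > 0 \<and> b n < r n \<and> r n < b (n + 1)"
proof -
  have "(R n > 0 \<and> b n < r n \<and> r n < b (n + 1))
        \<and> (R (n + 1) > 0 \<and> b (n + 1) < r (n + 1) \<and> r (n + 1) < b (n + 2))"
    using assms
  proof (induction n rule: nat_induct_at_least)
    case base
    have "r 4 = 329 / 87" "r 5 = 1359 / 329"
      unfolding r_def using R_small_values by simp_all
    moreover have "b 4 = 15/8 + 5/4 * sqrt 2" "b 5 = 21/10 + 7/5 * sqrt 2" "b 6 = 9/4 + 3/2 * sqrt 2"
      unfolding b_eq_beta beta_def by (simp_all add: field_simps)
    ultimately show ?case using R_small_values sqrt2_bounds by simp
  next
    case (Suc n)
    then show ?case using ratio_bracket_step[of n] by (simp add: eval_nat_numeral)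
  qed
  then show ?thesis by blast
qed

theorem lemma3p1:
  fixes n :: nat
  assumes "n \<ge> 3"
  shows "b n < r n \<and> r n < b (n + 1)"
proof (cases "n = 3")
  case True
  have "r 3 = 87 / 25" unfolding r_def using R_small_values by simp
  moreover have "b 3 = 3/2 + sqrt 2" "b 4 = 15/8 + 5/4 * sqrt 2"
    unfolding b_eq_beta beta_def by (simp_all add: field_simps)
  ultimately show ?thesis using True sqrt2_bounds by simp
next
  case False
  then show ?thesis using assms ratio_bracket[of n] by simp
qed

end
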